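(* For every $n\ge 1$, the sequence $\Lambda_n$ (defined in the context) contains every chain of the Greene–Kleitman symmetric chain decomposition of $Q_n$ exactly once.
   Context: Let $D$ be the set of all bitstrings (including the empty string $\varepsilon$) with equally many $0$s and $1$s such that every prefix contains at least as many $0$s as $1$s. The chains of the Greene–Kleitman symmetric chain decomposition of the hypercube $Q_n$ are exactly the paths encoded by strings of length $n$ over $\{0,1,*\}$ of the form $u_0*u_1*\cdots*u_{h-1}*u_h$ with $u_0,\ldots,u_h\in D$ (any $h\ge 0$); the vertices of such a chain are obtained by replacing the $*$s by $i$ ones followed by $h-i$ zeros, $i=0,\ldots,h$. The length $|C|$ of a chain $C$ is its number of $*$s. For a string $C$ over $\{0,1,*\}$ with at least two $*$s, $f(C)$ (resp. $\ell(C)$) is obtained by replacing the first two (resp. last two) $*$s by $0$ and $1$, respectively. For a sequence $\Gamma$, $\Gamma^R$ is its reversal. Define $\Lambda_0:=\varepsilon$ (the sequence with the single empty chain) and $\Lambda_1:=*$. For $n\ge 0$ and $\Lambda_n=C_1,\ldots,C_N$ set $\Lambda_{n+2}:=\rho(C_1),\ldots,\rho(C_N)$, where $\rho(C):=\lambda(C)$ if $|C|\equiv n\pmod 4$ and $\rho(C):=\lambda(C)^R$ otherwise, and for even $n$: $\lambda(C):=*C*,\ f( *C* ),\ f(\ell( *C* )),\ \ell( *C* )$ if $|C|\ge2$ and $\lambda(C):=*C*,\ 0C1$ if $|C|=0$; for odd $n$: $\lambda(C):=*C*,\ \ell( *C* ),\ \ell(f( *C* )),\ f( *C* )$ if $|C|\ge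 3$ and $\lambda(C):=*C*,\ \ell( *C* ),\ f( *C* )$ if $|C|=1$. *)

theory Defs
  imports Main
begin

datatype sym = Zero | One | Star

definition cnt :: "sym \<Rightarrow> sym list \<Rightarrow> nat" where
  "cnt a w = length (filter (\<lambda>x. x = a) w)"

definition dyck :: "sym list \<Rightarrow> bool" where
  "dyck w \<longleftrightarrow> set w \<subseteq> {Zero, One} \<and> cnt Zero w = cnt One w \<and>
     (\<forall>k \<le> length w. cnt One (take k w) \<le> cnt Zero (take k w))"

fun join :: "sym list list \<Rightarrow> sym list" where
  "join [] = []"
| "join [u] = u"
| "join (u # v # us) = u @ Star # join (v # us)"

definition gk_chain :: "sym list \<Rightarrow> bool" where
  "gk_chain C \<longleftrightarrow> (\<exists>us. us \<noteq> [] \<and> (\<forall>u\<in>set us. dyck u) \<and> C = join us)"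

definition clen :: "sym list \<Rightarrow> nat" where
  "clen C = cnt Star C"

fun repl1 :: "sym \<Rightarrow> sym list \<Rightarrow> sym list" where
  "repl1 b [] = []"
| "repl1 b (x # xs) = (if x = Star then b # xs else x # repl1 b xs)"

fun repl2 :: "sym \<Rightarrow> sym \<Rightarrow> sym list \<Rightarrow> sym list" where
  "repl2 a b [] = []"
| "repl2 a b (x # xs) = (if x = Star then a # repl1 b xs else x # repl2 a b xs)"

definition ff :: "sym list \<Rightarrow> sym list" where
  "ff C = repl2 Zero One C"

(* last two *s replaced by 0 and 1 respectively *)
definition ll :: "sym list \<Rightarrow> sym list" where
  "ll C = rev (repl2 One Zero (rev C))"

definition lam :: "nat \<Rightarrow> sym list \<Rightarrow> sym list list" where
  "lam n C = (let X = Star # C @ [Star] in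
     if even n then
       (if clen C \<ge> 2 then [X, ff X, ff (ll X), ll X] else [X, Zero # C @ [One]])
     else
       (if clen C \<ge> 3 then [X, ll X, ll (ff X), ff X] else [X, ll X, ff X]))"

definition rho :: "nat \<Rightarrow> sym list \<Rightarrow> sym list list" where
  "rho n C = (if clen C mod 4 = n mod 4 then lam n C else rev (lam n C))"

fun Lambda :: "nat \<Rightarrow> sym list list" where
  "Lambda 0 = [[]]"
| "Lambda (Suc 0) = [[Star]]"
| "Lambda (Suc (Suc n)) = concat (map (rho n) (Lambda n))"

end

theory Submission
  imports Defs
begin

(* Write a chain as u0 * u1 * ... * uh with Dyck words ui.  Replacing the first two stars by
   0 and 1 (the operation f) merges u0, u1, u2 into the single Dyck word u0 0 u1 1 u2, and l does
   the same with the last three components, so the entries of lambda(C) are chains with explicitly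
   known components.  Conversely, every chain D of length n + 2 has a parent of length n: drop an
   empty first (last) component of D, or split a nonempty one at its first-return decomposition
   0 b 1 c (last-return decomposition c 0 d 1).  These decompositions are unique, so the parent is
   well defined; every entry of lambda(C) has parent C, and D is an entry of lambda of its parent.
   Hence, inductively, the lists lambda(C) for the chains C of length n are duplicate-free,
   pairwise disjoint, and together cover all chains of length n + 2. *)

lemma cnt_simps [simp]:
  "cnt a [] = 0"
  "cnt a (x # w) = (if x = a then Suc (cnt a w) else cnt a w)"
  "cnt a (u @ v) = cnt a u + cnt a v"
  by (auto simp: cnt_def)

section \<open>Dyck words\<close>

(* dyck_at k w holds iff replicate k Zero @ w is a Dyck word. *)
fun dyck_at :: "nat \<Rightarrow> sym list \<Rightarrow> bool" where
  "dyck_at k [] \<longleftrightarrow> k = 0"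
| "dyck_at k (Zero # w) \<longleftrightarrow> dyck_at (Suc k) w"
| "dyck_at k (One # w) \<longleftrightarrow> 0 < k \<and> dyck_at (k - 1) w"
| "dyck_at k (Star # w) \<longleftrightarrow> False"

lemma dyck_at_iff:
  "dyck_at k w \<longleftrightarrow> set w \<subseteq> {Zero, One} \<and> k + cnt Zero w = cnt One w \<and>
     (\<forall>j \<le> length w. cnt One (take j w) \<le> k + cnt Zero (take j w))"
proof (induction w arbitrary: k)
  case Nil
  then show ?case by auto
next
  case (Cons x w)
  have "(\<forall>j \<le> Suc m. Q j) \<longleftrightarrow> Q 0 \<and> (\<forall>j \<le> m. Q (Suc j))" for m and Q :: "nat \<Rightarrow> bool"
    by (metis Suc_le_mono le0 not0_implies_Suc)
  then show ?case
    using Cons.IH by (cases x; cases k) auto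
qed

lemma dyck_iff_dyck_at: "dyck w \<longleftrightarrow> dyck_at 0 w"
  by (simp add: dyck_def dyck_at_iff)

lemma dyck_Nil [simp]: "dyck []"
  by (simp add: dyck_iff_dyck_at)

lemma Star_notin_dyck: "dyck w \<Longrightarrow> Star \<notin> set w"
  by (auto simp: dyck_def)

lemma dyck_at_append: "dyck_at j a \<Longrightarrow> dyck_at (k + j) (a @ w) \<longleftrightarrow> dyck_at k w"
proof (induction j a arbitrary: k rule: dyck_at.induct)
  case (3 j a)
  then show ?case by (cases j) auto
qed auto

lemma dyck_at_append_balanced: "dyck_at 0 a \<Longrightarrow> dyck_at k (a @ w) \<longleftrightarrow> dyck_at k w"
  using dyck_at_append[of 0 a k w] by simp

lemma dyck_at_prefix_le: "dyck_at j a \<Longrightarrow> dyck_at k (a @ w) \<Longrightarrow> j \<le> k"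
proof (induction j a arbitrary: k rule: dyck_at.induct)
  case (3 j a)
  then show ?case by (cases k) fastforce+
qed auto

lemma dyck_at_Suc_split:
  "dyck_at (Suc k) w \<Longrightarrow> \<exists>a b. w = a @ One # b \<and> dyck a \<and> dyck_at k b"
proof (induction "length w" arbitrary: w k rule: less_induct)
  case less
  then obtain x w' where w: "w = x # w'"
    by (cases w) auto
  show ?case
  proof (cases x)
    case Zero
    with less.prems w obtain a b where ab: "w' = a @ One # b" "dyck a" "dyck_at (Suc k) b"
      using less.hyps[of w' "Suc k"] by auto
    with w obtain c d where cd: "b = c @ One # d" "dyck c" "dyck_at k d"
      using less.hyps[of b k] by auto
    have "dyck (Zero # a @ One # c)"
      using ab(2) cd(2) by (simp add: dyck_iff_dyck_at dyck_at_append_balanced)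
    with w Zero ab cd show ?thesis
      by (intro exI[of _ "Zero # a @ One # c"] exI[of _ d]) simp
  next
    case One
    with less.prems w show ?thesis
      by (intro exI[of _ "[]"] exI[of _ w']) simp
  qed (use less.prems w in simp)
qed

definition merge :: "sym list \<Rightarrow> sym list \<Rightarrow> sym list \<Rightarrow> sym list" where
  "merge a b c = a @ Zero # b @ One # c"

lemma merge_not_Nil [simp]: "merge a b c \<noteq> []"
  by (simp add: merge_def)

lemma Star_notin_merge [simp]:
  "Star \<notin> set (merge a b c) \<longleftrightarrow> Star \<notin> set a \<and> Star \<notin> set b \<and> Star \<notin> set c"
  by (auto simp: merge_def)

lemma dyck_merge [simp]: "dyck a \<Longrightarrow> dyck b \<Longrightarrow> dyck c \<Longrightarrow> dyck (merge a b c)"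
  by (simp add: merge_def dyck_iff_dyck_at dyck_at_append_balanced)

lemma dyck_first_return:
  assumes "dyck w" "w \<noteq> []"
  shows "\<exists>b c. dyck b \<and> dyck c \<and> w = merge [] b c"
proof -
  obtain x w' where w: "w = x # w'"
    using \<open>w \<noteq> []\<close> by (cases w) auto
  with \<open>dyck w\<close> have "x = Zero" "dyck_at 1 w'"
    by (cases x; simp add: dyck_iff_dyck_at)+
  with w show ?thesis
    using dyck_at_Suc_split[of 0 w'] by (auto simp: merge_def dyck_iff_dyck_at)
qed

lemma dyck_last_return: "dyck w \<Longrightarrow> w \<noteq> [] \<Longrightarrow> \<exists>c d. dyck c \<and> dyck d \<and> w = merge c d []"
proof (induction "length w" arbitrary: w rule: less_induct)
  case less
  then obtain a b where ab: "dyck a" "dyck b" "w = merge [] a b"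
    using dyck_first_return by blast
  show ?case
  proof (cases "b = []")
    case True
    with ab show ?thesis
      by (intro exI[of _ "[]"] exI[of _ a]) simp
  next
    case False
    then obtain c d where cd: "dyck c" "dyck d" "b = merge c d []"
      using less.hyps[of b] ab by (auto simp: merge_def)
    with ab have "w = merge (merge [] a c) d []"
      by (simp add: merge_def)
    with ab cd show ?thesis
      by (meson dyck_Nil dyck_merge)
  qed
qed

lemma append_Cons_eq_append_Cons_cases:
  "a @ x # b = a' @ x # b' \<Longrightarrow>
     a = a' \<and> b = b' \<or> (\<exists>e. a' = a @ x # e \<and> b = e @ x # b') \<or> (\<exists>e. a = a' @ x # e \<and> b' = e @ x # b)"
  by (auto simp: append_eq_append_conv2 append_eq_Cons_conv Cons_eq_append_conv)

lemma first_return_unique: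
  assumes "dyck b" "dyck b'" "merge [] b c = merge [] b' c'"
  shows "b = b' \<and> c = c'"
proof -
  have "\<not> dyck (a @ One # e)" if "dyck a" for a e
    using that by (simp add: dyck_iff_dyck_at dyck_at_append_balanced)
  with assms show ?thesis
    by (auto simp: merge_def dest: append_Cons_eq_append_Cons_cases)
qed

lemma last_return_unique:
  assumes "dyck c" "dyck c'" "dyck d" "dyck d'" "merge c d [] = merge c' d' []"
  shows "c = c' \<and> d = d'"
proof -
  have overlap: False if "dyck a" "dyck (a @ Zero # e)" "dyck (e @ Zero # b)" for a b e
  proof -
    have "dyck_at 1 e"
      using that(1,2) by (simp add: dyck_iff_dyck_at dyck_at_append_balanced)
    with that(3) show False
      using dyck_at_prefix_le by (fastforce simp: dyck_iff_dyck_at)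
  qed
  from assms(5) have "c @ Zero # d = c' @ Zero # d'"
    by (simp add: merge_def)
  then show ?thesis
    using append_Cons_eq_append_Cons_cases overlap assms(1-4) by metis
qed

definition first_return :: "sym list \<Rightarrow> sym list \<times> sym list" where
  "first_return w = (THE (b, c). dyck b \<and> dyck c \<and> w = merge [] b c)"

definition last_return :: "sym list \<Rightarrow> sym list \<times> sym list" where
  "last_return w = (THE (c, d). dyck c \<and> dyck d \<and> w = merge c d [])"

lemma first_return_merge [simp]:
  assumes "dyck b" "dyck c"
  shows "first_return (merge [] b c) = (b, c)"
  unfolding first_return_def
proof (rule the_equality)
  fix p
  assume "case p of (b', c') \<Rightarrow> dyck b' \<and> dyck c' \<and> merge [] b c = merge [] b' c'"
  then obtain b' c' where "p = (b', c')" "dyck b'" "dyck c'" "merge [] b c = merge [] b' c'"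
    by (cases p) auto
  with assms show "p = (b, c)"
    using first_return_unique by blast
qed (simp add: assms)

lemma last_return_merge [simp]:
  assumes "dyck c" "dyck d"
  shows "last_return (merge c d []) = (c, d)"
  unfolding last_return_def
proof (rule the_equality)
  fix p
  assume "case p of (c', d') \<Rightarrow> dyck c' \<and> dyck d' \<and> merge c d [] = merge c' d' []"
  then obtain c' d' where "p = (c', d')" "dyck c'" "dyck d'" "merge c d [] = merge c' d' []"
    by (cases p) auto
  with assms show "p = (c, d)"
    using last_return_unique by blast
qed (simp add: assms)

section \<open>Chains as joins of their components\<close>

lemma join_Cons_append: "join ((u @ v) # us) = u @ join (v # us)"
  by (cases us) auto

lemma join_snoc: "us \<noteq> [] \<Longrightarrow> join (us @ [v]) = join us @ Star # v"
  by (induction us rule: join.induct) auto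

lemma join_Nil_Cons: "us \<noteq> [] \<Longrightarrow> join ([] # us) = Star # join us"
  by (cases us) auto

lemma join_bracket: "us \<noteq> [] \<Longrightarrow> Star # join us @ [Star] = join ([] # us @ [[]])"
  by (simp add: join_Nil_Cons join_snoc)

lemma rev_join: "rev (join us) = join (rev (map rev us))"
proof (induction us rule: join.induct)
  case (3 u v us)
  then show ?case
    using join_snoc[of "rev (map rev us) @ [rev v]" "rev u"] by simp
qed auto

fun components :: "sym list \<Rightarrow> sym list list" where
  "components [] = [[]]"
| "components (x # w) =
     (let us = components w in if x = Star then [] # us else (x # hd us) # tl us)"

lemma components_not_Nil [simp]: "components w \<noteq> []"
  by (cases w) (auto simp: Let_def)

lemma components_append:
  "Star \<notin> set u \<Longrightarrow> components (u @ w) = (u @ hd (components w)) # tl (components w)"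
  by (induction u) (auto simp: Let_def)

lemma components_join:
  "us \<noteq> [] \<Longrightarrow> \<forall>u\<in>set us. Star \<notin> set u \<Longrightarrow> components (join us) = us"
  by (induction us rule: join.induct)
    (auto simp: components_append components_append[where w = "[]", simplified])

lemma inj_on_join: "inj_on join {us. us \<noteq> [] \<and> (\<forall>u\<in>set us. Star \<notin> set u)}"
  by (rule inj_on_inverseI[where g = components]) (simp add: components_join)

lemma cnt_Star_join: "\<forall>u\<in>set us. Star \<notin> set u \<Longrightarrow> cnt Star (join us) = length us - 1"
proof -
  have "Star \<notin> set u \<Longrightarrow> cnt Star u = 0" for u
    by (induction u) auto
  then show "\<forall>u\<in>set us. Star \<notin> set u \<Longrightarrow> ?thesis"
    by (induction us rule: join.induct) auto
qed

lemma length_join_dyck: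
  assumes "\<forall>u\<in>set us. dyck u"
  shows "length (join us) = 2 * cnt Zero (join us) + (length us - 1)"
proof -
  have "length w = cnt Zero w + cnt One w + cnt Star w" for w
  proof (induction w)
    case (Cons x w)
    then show ?case by (cases x) auto
  qed simp
  moreover have "cnt Zero (join us) = cnt One (join us)"
    using assms by (induction us rule: join.induct) (auto simp: dyck_def)
  moreover have "cnt Star (join us) = length us - 1"
    using assms cnt_Star_join Star_notin_dyck by blast
  ultimately show ?thesis
    by simp
qed

section \<open>The operations f and l on component lists\<close>

lemma repl1_append: "Star \<notin> set u \<Longrightarrow> repl1 y (u @ Star # w) = u @ y # w"
  by (induction u) auto

lemma repl2_append: "Star \<notin> set u \<Longrightarrow> repl2 x y (u @ Star # w) = u @ x # repl1 y w"
  by (induction u) auto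

lemma repl2_join:
  "Star \<notin> set a \<Longrightarrow> Star \<notin> set b \<Longrightarrow>
     repl2 x y (join (a # b # c # r)) = join ((a @ x # b @ y # c) # r)"
  using join_Cons_append[of "a @ x # b @ [y]" c r] by (simp add: repl2_append repl1_append)

lemma length_repl1 [simp]: "length (repl1 y w) = length w"
  by (induction w) auto

lemma length_repl2 [simp]: "length (repl2 x y w) = length w"
  by (induction w) auto

lemma length_ff [simp]: "length (ff w) = length w"
  by (simp add: ff_def)

lemma length_ll [simp]: "length (ll w) = length w"
  by (simp add: ll_def)

definition merge_first :: "sym list list \<Rightarrow> sym list list" where
  "merge_first vs = (case vs of a # b # c # r \<Rightarrow> merge a b c # r | _ \<Rightarrow> vs)"

definition merge_last :: "sym list list \<Rightarrow> sym list list" where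
  "merge_last vs = (case rev vs of c # b # a # r \<Rightarrow> rev r @ [merge a b c] | _ \<Rightarrow> vs)"

lemma merge_first_Cons [simp]: "merge_first (a # b # c # r) = merge a b c # r"
  by (simp add: merge_first_def)

lemma merge_last_snoc [simp]: "merge_last (r @ [a, b, c]) = r @ [merge a b c]"
  by (simp add: merge_last_def)

lemma merge_first_not_Nil [simp]: "merge_first vs = [] \<longleftrightarrow> vs = []"
  by (simp add: merge_first_def split: list.split)

lemma merge_last_not_Nil [simp]: "merge_last vs = [] \<longleftrightarrow> vs = []"
  by (auto simp: merge_last_def split: list.split)

lemma length_merge_first [simp]:
  "length (merge_first vs) = (if 3 \<le> length vs then length vs - 2 else length vs)"
  by (auto simp: merge_first_def split: list.split)

lemma length_merge_last [simp]:
  "length (merge_last vs) = (if 3 \<le> length vs then length vs - 2 else length vs)"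
  by (auto simp: merge_last_def split: list.split dest: arg_cong[where f = length])

lemma merge_first_preserves:
  assumes "\<And>a b c. P a \<Longrightarrow> P b \<Longrightarrow> P c \<Longrightarrow> P (merge a b c)" "\<forall>v\<in>set vs. P v"
  shows "\<forall>v\<in>set (merge_first vs). P v"
  using assms by (auto simp: merge_first_def split: list.split)

lemma merge_last_preserves:
  assumes "\<And>a b c. P a \<Longrightarrow> P b \<Longrightarrow> P c \<Longrightarrow> P (merge a b c)" "\<forall>v\<in>set vs. P v"
  shows "\<forall>v\<in>set (merge_last vs). P v"
  using assms by (auto simp: merge_last_def split: list.split dest: arg_cong[where f = set])

lemma ff_join:
  assumes "3 \<le> length vs" "\<forall>v\<in>set vs. Star \<notin> set v"
  shows "ff (join vs) = join (merge_first vs)"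
proof -
  obtain a b c r where "vs = a # b # c # r"
    using assms(1) by (auto simp: numeral_3_eq_3 Suc_le_length_iff)
  with assms(2) show ?thesis
    by (simp add: ff_def repl2_join merge_def del: join.simps)
qed

lemma ll_join:
  assumes "3 \<le> length vs" "\<forall>v\<in>set vs. Star \<notin> set v"
  shows "ll (join vs) = join (merge_last vs)"
proof -
  have "3 \<le> length (rev vs)"
    using assms(1) by simp
  then obtain c b a r' where "rev vs = c # b # a # r'"
    unfolding numeral_3_eq_3 Suc_le_length_iff by blast
  then obtain r where vs: "vs = r @ [a, b, c]"
    by simp
  have "rev (join vs) = join (rev c # rev b # rev a # rev (map rev r))"
    by (simp add: vs rev_join)
  with assms(2) vs show ?thesis
    by (simp add: ll_def repl2_join rev_join rev_map merge_def del: join.simps)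
qed

lemma nonempty_list_cases:
  assumes "us \<noteq> []"
  obtains b where "us = [b]"
  | b c where "us = [b, c]"
  | b c d where "us = [b, c, d]"
  | b c r c' d' where "us = b # c # r @ [c', d']"
proof -
  have "length us \<noteq> 0"
    using assms by simp
  then consider "length us = 1" | "length us = 2" | "length us = 3" | "4 \<le> length us"
    by linarith
  then show thesis
  proof cases
    case 4
    then obtain b c t where bct: "us = b # c # t" "2 \<le> length (rev t)"
      by (auto simp: numeral_eq_Suc Suc_le_length_iff)
    then obtain d' c' r' where "rev t = d' # c' # r'"
      unfolding numeral_2_eq_2 Suc_le_length_iff by blast
    with bct that(4) show thesis
      by simp
  qed (use that in \<open>auto simp: numeral_eq_Suc length_Suc_conv\<close>)
qed

section \<open>Children and parent of a chain\<close>

(* lam_def transported to component lists: [] # us @ [[]] lists the components of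
   Star # join us @ [Star], and merge_first, merge_last play the roles of ff, ll (see lam_join). *)
definition children :: "nat \<Rightarrow> sym list list \<Rightarrow> sym list list list" where
  "children n us = (let X = [] # us @ [[]] in
     if even n then
       (if 3 \<le> length us then [X, merge_first X, merge_first (merge_last X), merge_last X]
        else [X, [merge [] (hd us) []]])
     else
       (if 4 \<le> length us then [X, merge_last X, merge_last (merge_first X), merge_first X]
        else [X, merge_last X, merge_first X]))"

lemma lam_join:
  assumes "us \<noteq> []" "\<forall>u\<in>set us. Star \<notin> set u" "even n \<longleftrightarrow> odd (length us)"
  shows "lam n (join us) = map join (children n us)"
proof -
  define X where "X = [] # us @ [[]]"
  have X_star_free: "\<forall>v\<in>set X. Star \<notin> set v"
    using assms(2) by (simp add: X_def)
  have merged_star_free: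
    "\<forall>v\<in>set (merge_first X). Star \<notin> set v" "\<forall>v\<in>set (merge_last X). Star \<notin> set v"
    by (rule merge_first_preserves merge_last_preserves; use X_star_free in simp)+
  have "length X = length us + 2" "3 \<le> length X"
    using assms(1) by (simp_all add: X_def Suc_le_eq)
  then have ff_ll:
    "ff (join X) = join (merge_first X)" "ll (join X) = join (merge_last X)"
    "3 \<le> length us \<Longrightarrow> ff (join (merge_last X)) = join (merge_first (merge_last X))"
    "3 \<le> length us \<Longrightarrow> ll (join (merge_first X)) = join (merge_last (merge_first X))"
    using X_star_free merged_star_free by (simp_all add: ff_join ll_join)
  have "Star # join us @ [Star] = join X"
    using assms(1) by (simp add: X_def join_bracket)
  moreover have "clen (join us) = length us - 1"
    using assms(2) by (simp add: clen_def cnt_Star_join)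
  moreover have "Zero # join us @ [One] = join [merge [] (hd us) []]" if "length us < 3" "even n"
  proof -
    have "length us = 1"
      using that assms(1,3) by (cases "length us") auto
    then show ?thesis
      by (auto simp: merge_def length_Suc_conv)
  qed
  ultimately show ?thesis
    using assms(1,3) ff_ll unfolding lam_def children_def Let_def X_def[symmetric]
    by (cases "even n") auto
qed

lemma children_dyck:
  assumes "us \<noteq> []" "\<forall>u\<in>set us. dyck u" "vs \<in> set (children n us)"
  shows "vs \<noteq> [] \<and> (\<forall>v\<in>set vs. dyck v)"
proof -
  define X where "X = [] # us @ [[]]"
  define S where "S = {X, merge_first X, merge_last X, merge_first (merge_last X),
    merge_last (merge_first X), [merge [] (hd us) []]}"
  have merged: "\<forall>v\<in>set (merge_first ws). dyck v" "\<forall>v\<in>set (merge_last ws). dyck v"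
    if "\<forall>v\<in>set ws. dyck v" for ws
    by (rule merge_first_preserves merge_last_preserves; use that in simp)+
  have "\<forall>v\<in>set X. dyck v"
    using assms(2) by (simp add: X_def)
  moreover have "\<forall>v\<in>set [merge [] (hd us) []]. dyck v"
    using assms(1,2) by simp
  ultimately have "\<forall>ws\<in>S. \<forall>v\<in>set ws. dyck v"
    using merged unfolding S_def by blast
  moreover have "\<forall>ws\<in>S. ws \<noteq> []"
    by (simp add: S_def X_def)
  moreover have "vs \<in> S"
    using assms(3) by (auto simp: children_def Let_def X_def S_def split: if_splits)
  ultimately show ?thesis
    by blast
qed

fun split_first :: "sym list list \<Rightarrow> sym list list" where
  "split_first [] = []"
| "split_first (v # vs) = (if v = [] then vs else case first_return v of (b, c) \<Rightarrow> b # c # vs)"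

definition split_last :: "sym list list \<Rightarrow> sym list list" where
  "split_last vs =
     (if vs = [] then [] else if last vs = [] then butlast vs
      else butlast vs @ (case last_return (last vs) of (c, d) \<Rightarrow> [c, d]))"

definition parent :: "sym list list \<Rightarrow> sym list list" where
  "parent vs = split_last (split_first vs)"

lemma distinct_children:
  assumes "us \<noteq> []" "even n \<longleftrightarrow> odd (length us)"
  shows "distinct (children n us)"
  using assms by (cases us rule: nonempty_list_cases) (auto simp: children_def Let_def merge_last_def)

lemma parent_children:
  assumes "us \<noteq> []" "\<forall>u\<in>set us. dyck u" "even n \<longleftrightarrow> odd (length us)" "vs \<in> set (children n us)"
  shows "parent vs = us"
  using assms
  by (cases us rule: nonempty_list_cases)
    (auto simp: children_def Let_def parent_def split_last_def merge_last_def butlast_append)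

lemma dyck_components_cases:
  assumes "vs \<noteq> []" "\<forall>v\<in>set vs. dyck v" "2 \<le> length (join vs)"
  obtains (bare) b where "vs = [merge [] b []]" "dyck b"
  | (nested) b c d where "vs = [merge [] b (merge c d [])]" "dyck b" "dyck c" "dyck d"
  | (plain) m where "vs = [] # m @ [[]]" "m \<noteq> []" "\<forall>v\<in>set m. dyck v"
  | (last) m c d where "vs = [] # m @ [merge c d []]" "\<forall>v\<in>set m. dyck v" "dyck c" "dyck d"
  | (first) b c m where "vs = merge [] b c # m @ [[]]" "dyck b" "dyck c" "\<forall>v\<in>set m. dyck v"
  | (both) b c m c' d' where "vs = merge [] b c # m @ [merge c' d' []]"
      "dyck b" "dyck c" "\<forall>v\<in>set m. dyck v" "dyck c'" "dyck d'"
proof -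
  consider (single) w where "vs = [w]" | (multi) a m z where "vs = a # m @ [z]"
    using assms(1) by (metis list.exhaust rev_exhaust)
  then show thesis
  proof cases
    case single
    with assms obtain b c where "vs = [merge [] b c]" "dyck b" "dyck c"
      using dyck_first_return by fastforce
    then show thesis
      using dyck_last_return[of c] bare nested by (cases "c = []") auto
  next
    case multi
    with assms have "dyck a" "dyck z" "\<forall>v\<in>set m. dyck v" "m = [] \<longrightarrow> a \<noteq> [] \<or> z \<noteq> []"
      by auto
    with multi show thesis
      using dyck_first_return[of a] dyck_last_return[of z] plain last first both by blast
  qed
qed

lemma mem_children_parent:
  assumes "vs \<noteq> []" "\<forall>v\<in>set vs. dyck v" "length (join vs) = Suc (Suc n)"
  shows "parent vs \<noteq> [] \<and> (\<forall>u\<in>set (parent vs). dyck u) \<and> (even n \<longleftrightarrow> odd (length (parent vs)))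
    \<and> vs \<in> set (children n (parent vs))"
proof -
  have "Suc (Suc n) = 2 * cnt Zero (join vs) + (length vs - 1)" "length vs \<noteq> 0"
    using length_join_dyck[OF assms(2)] assms by simp_all
  then have parity: "even n \<longleftrightarrow> odd (length vs)"
    by presburger
  have "2 \<le> length (join vs)"
    using assms(3) by simp
  with assms(1,2) show ?thesis
    by (cases rule: dyck_components_cases)
      (use parity in \<open>simp_all add: children_def Let_def parent_def split_last_def merge_last_def Suc_le_eq\<close>)
qed

section \<open>Enumeration of the chains\<close>

definition gk_chains :: "nat \<Rightarrow> sym list set" where
  "gk_chains n = {C. length C = n \<and> gk_chain C}"

lemma length_lam: "D \<in> set (lam n C) \<Longrightarrow> length D = length C + 2"
  by (auto simp: lam_def Let_def split: if_splits)

lemma gk_chainsE: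
  assumes "C \<in> gk_chains n"
  obtains us where "C = join us" "us \<noteq> []" "\<forall>u\<in>set us. dyck u"
    "even n \<longleftrightarrow> odd (length us)" "lam n C = map join (children n us)"
proof -
  obtain us where us: "C = join us" "us \<noteq> []" "\<forall>u\<in>set us. dyck u" "length C = n"
    using assms by (auto simp: gk_chains_def gk_chain_def)
  moreover have "n = 2 * cnt Zero C + (length us - 1)" "length us \<noteq> 0"
    using us length_join_dyck[of us] by simp_all
  then have parity: "even n \<longleftrightarrow> odd (length us)"
    by presburger
  moreover have "lam n C = map join (children n us)"
    using us parity Star_notin_dyck by (simp add: lam_join)
  ultimately show thesis
    using that by blast
qed

lemma inj_on_join_children:
  assumes "us \<noteq> []" "\<forall>u\<in>set us. dyck u"
  shows "inj_on join (set (children n us))"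
proof (rule inj_on_subset[OF inj_on_join])
  show "set (children n us) \<subseteq> {vs. vs \<noteq> [] \<and> (\<forall>v\<in>set vs. Star \<notin> set v)}"
    using children_dyck[OF assms] Star_notin_dyck by blast
qed

lemma lam_subset_gk_chains: "C \<in> gk_chains n \<Longrightarrow> set (lam n C) \<subseteq> gk_chains (Suc (Suc n))"
proof
  fix D
  assume C: "C \<in> gk_chains n" and D: "D \<in> set (lam n C)"
  from C obtain us where us: "us \<noteq> []" "\<forall>u\<in>set us. dyck u" "lam n C = map join (children n us)"
    by (rule gk_chainsE)
  with D obtain vs where "vs \<in> set (children n us)" "D = join vs"
    by auto
  with us have "D = join vs" "vs \<noteq> []" "\<forall>v\<in>set vs. dyck v"
    using children_dyck by blast+
  moreover have "length D = Suc (Suc n)"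
    using length_lam[OF D] C by (simp add: gk_chains_def)
  ultimately show "D \<in> gk_chains (Suc (Suc n))"
    by (auto simp: gk_chains_def gk_chain_def)
qed

lemma distinct_lam: "C \<in> gk_chains n \<Longrightarrow> distinct (lam n C)"
  by (erule gk_chainsE) (simp add: distinct_map distinct_children inj_on_join_children)

lemma lam_disjoint:
  assumes "C \<in> gk_chains n" "C' \<in> gk_chains n" "D \<in> set (lam n C)" "D \<in> set (lam n C')"
  shows "C = C'"
proof -
  obtain us where us: "C = join us" "us \<noteq> []" "\<forall>u\<in>set us. dyck u"
    "even n \<longleftrightarrow> odd (length us)" "lam n C = map join (children n us)"
    using assms(1) by (rule gk_chainsE)
  obtain us' where us': "C' = join us'" "us' \<noteq> []" "\<forall>u\<in>set us'. dyck u"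
    "even n \<longleftrightarrow> odd (length us')" "lam n C' = map join (children n us')"
    using assms(2) by (rule gk_chainsE)
  obtain vs vs' where vs: "vs \<in> set (children n us)" "vs' \<in> set (children n us')" "join vs = join vs'"
    using assms(3,4) us(5) us'(5) by auto
  have "vs = vs'"
    using inj_on_join children_dyck[OF us(2,3) vs(1)] children_dyck[OF us'(2,3) vs(2)] vs(3)
      Star_notin_dyck by (auto dest: inj_onD)
  then have "us = us'"
    using parent_children[OF us(2-4) vs(1)] parent_children[OF us'(2-4) vs(2)] by simp
  with us(1) us'(1) show ?thesis
    by simp
qed

lemma gk_chains_covered:
  assumes "D \<in> gk_chains (Suc (Suc n))"
  shows "\<exists>C\<in>gk_chains n. D \<in> set (lam n C)"
proof -
  obtain vs where vs: "D = join vs" "vs \<noteq> []" "\<forall>v\<in>set vs. dyck v" "length D = Suc (Suc n)"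
    using assms by (auto simp: gk_chains_def gk_chain_def)
  define C where "C = join (parent vs)"
  have us: "parent vs \<noteq> []" "\<forall>u\<in>set (parent vs). dyck u" "even n \<longleftrightarrow> odd (length (parent vs))"
    "vs \<in> set (children n (parent vs))"
    using mem_children_parent[of vs n] vs by auto
  then have "D \<in> set (lam n C)"
    using vs(1) Star_notin_dyck by (simp add: C_def lam_join)
  moreover have "C \<in> gk_chains n"
    using length_lam[OF calculation] us(1,2) vs(4) by (auto simp: C_def gk_chains_def gk_chain_def)
  ultimately show ?thesis
    by blast
qed

lemma gk_chains_0: "gk_chains 0 = {[]}"
  using gk_chain_def[of "[]"] by (auto simp: gk_chains_def intro!: exI[of _ "[[]]"])

lemma gk_chains_Suc_0: "gk_chains (Suc 0) = {[Star]}"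
proof -
  have "[Star] \<in> gk_chains (Suc 0)"
    by (auto simp: gk_chains_def gk_chain_def intro!: exI[of _ "[[], []]"])
  moreover have "C = [Star]" if C: "C \<in> gk_chains (Suc 0)" for C
  proof -
    obtain us where us: "C = join us" "\<forall>u\<in>set us. dyck u" "length C = 1"
      using C by (auto simp: gk_chains_def gk_chain_def)
    then have "length us = 2"
      using length_join_dyck[of us] by presburger
    then have "cnt Star C = 1"
      using us cnt_Star_join Star_notin_dyck by simp
    with us(3) show "C = [Star]"
      by (cases C) (auto split: if_splits simp: cnt_def)
  qed
  ultimately show ?thesis
    by blast
qed

lemma distinct_concat_map:
  assumes "distinct xs" "\<And>x. x \<in> set xs \<Longrightarrow> distinct (f x) \<and> f x \<noteq> []"
    and "\<And>x y. x \<in> set xs \<Longrightarrow> y \<in> set xs \<Longrightarrow> set (f x) \<inter> set (f y) \<noteq> {} \<Longrightarrow> x = y"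
  shows "distinct (concat (map f xs))"
proof (rule distinct_concat)
  have "inj_on f (set xs)"
    using assms(2,3) by (fastforce intro: inj_onI)
  with assms(1) show "distinct (map f xs)"
    by (simp add: distinct_map)
qed (use assms in auto)

theorem Lambda_enumerates_gk_chains: "distinct (Lambda n) \<and> set (Lambda n) = gk_chains n"
proof (induction n rule: Lambda.induct)
  case 1
  then show ?case by (simp add: gk_chains_0)
next
  case 2
  then show ?case by (simp add: gk_chains_Suc_0)
next
  case (3 n)
  then have IH: "distinct (Lambda n)" "set (Lambda n) = gk_chains n"
    by simp_all
  have rho: "set (rho n C) = set (lam n C)" "distinct (rho n C) = distinct (lam n C)" for C
    by (simp_all add: rho_def)
  have "rho n C \<noteq> []" for C
    by (simp add: rho_def lam_def Let_def)
  then have "distinct (concat (map (rho n) (Lambda n)))"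
    using IH lam_disjoint distinct_lam by (intro distinct_concat_map) (auto simp: rho)
  moreover have "set (concat (map (rho n) (Lambda n))) = gk_chains (Suc (Suc n))"
    using IH lam_subset_gk_chains gk_chains_covered by (auto simp: rho)
  ultimately show ?case
    by simp
qed

theorem lemma17:
  fixes n :: nat
  assumes "n \<ge> 1"
  shows "distinct (Lambda n) \<and> set (Lambda n) = {C. length C = n \<and> gk_chain C}"
  using Lambda_enumerates_gk_chains[of n] by (simp add: gk_chains_def)

end
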